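(* Let $\mathcal G$ be a finite connected groupoid and $\alpha=(S_g,\alpha_g)_{g\in\mathcal G}$ a unital group-type partial action of $\mathcal G$ on a commutative ring $S=\bigoplus_{y\in\mathcal G_0}S_y$, with $S_g=S1_g$ and $1_g\neq0$ for all $g$. Let $\mathcal H\in\mathrm{wSub}_\alpha(\mathcal G)$, with connected components $\mathcal H_1,\dots,\mathcal H_r$ having object sets $Y_1,\dots,Y_r$, and choose $y_j\in Y_j$. Let $T=S^{\alpha_{\mathcal H}}$, $R=S^{\alpha_{\mathcal G}}$, $T_{y_j}=S_{y_j}^{\alpha_{\mathcal H_j(y_j)}}$ and $R_{y_j}=S_{y_j}^{\alpha_{\mathcal G(y_j)}}$. Then $R\subseteq T$ is separable if and only if $R_{y_j}\subseteq T_{y_j}$ is separable for all $1\le j\le r$.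
   Context: A groupoid is a small category with all morphisms invertible; $\mathcal G_0$ is its object set (identified with identity morphisms), $s(g),t(g)$ source and target, $\mathcal G(x,y)=\{g:s(g)=x,t(g)=y\}$, $\mathcal G(x)=\mathcal G(x,x)$; $gh$ defined iff $s(g)=t(h)$; connected means all $\mathcal G(x,y)\ne\emptyset$; connected components are full subgroupoids on classes of $x\sim y\iff\mathcal G(x,y)\ne\emptyset$; wide means containing all objects. A partial action $\alpha=(S_g,\alpha_g)_{g\in\mathcal G}$ on a ring $S$: for each $g$, $S_{t(g)}$ is an ideal of $S$, $S_g$ an ideal of $S_{t(g)}$, $\alpha_g:S_{g^{-1}}\to S_g$ a ring isomorphism; $\alpha_x=\mathrm{id}_{S_x}$; for composable $(g,h)$, $\alpha_h^{-1}(S_{g^{-1}}\cap S_h)\subseteq S_{(gh)^{-1}}$ and $\alpha_g\alpha_h(a)=\alpha_{gh}(a)$ there. Unital: $S_g=S1_g$, $1_g$ central idempotent. A partial action of a connected groupoid $\mathcal K$ on $A=\bigoplus_{y\in\mathcal K_0}A_y$ is group-type if there are $x\in\mathcal K_0$ and $\tau_y\in\mathcal K(x,y)$ ($\tau_x=x$) with $A_{\tau_y^{-1}}=A_x$, $A_{\tau_y}=A_y$ for all $y$; for non-connected $\mathcal K$ it is group-type if each restriction to a connected component $\mathcal K_Y$ (acting on $\bigoplus_{y\in Y}A_y$) is group-type. For a subgroupoid $\mathcal H$, $\alpha_{\mathcal H}=(S_h,\alpha_h)_{h\in\mathcal H}$ acts on $\bigoplus_{z\in\mathcal H_0}S_z$;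 $\mathrm{wSub}_\alpha(\mathcal G)$ is the set of wide subgroupoids $\mathcal H$ with $\alpha_{\mathcal H}$ group-type. For a subgroupoid $\mathcal K$ and subring $A\subseteq S$, $A^{\alpha_{\mathcal K}}=\{a\in A:\alpha_k(a1_{k^{-1}})=a1_k\ \forall k\in\mathcal K\}$. A unital ring extension $B\subseteq C$ is separable if the multiplication $C\otimes_BC\to C$ splits as a map of $C$-bimodules, equivalently there is $e\in C\otimes_BC$ with $ce=ec$ for all $c\in C$ and $m(e)=1_C$. *)

theory Defs
  imports Main
begin

text \<open>Objects are identified with identity morphisms: the objects are the sources s g.\<close>

definition groupoid ::
  "'g set \<Rightarrow> ('g \<Rightarrow> 'g) \<Rightarrow> ('g \<Rightarrow> 'g) \<Rightarrow> ('g \<Rightarrow> 'g \<Rightarrow> 'g) \<Rightarrow> ('g \<Rightarrow> 'g) \<Rightarrow> bool" where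
  "groupoid G s t m i \<longleftrightarrow>
     (\<forall>g\<in>G. s g \<in> G \<and> t g \<in> G \<and> i g \<in> G) \<and>
     (\<forall>g\<in>G. s (s g) = s g \<and> t (s g) = s g \<and> s (t g) = t g \<and> t (t g) = t g) \<and>
     (\<forall>g\<in>G. \<forall>h\<in>G. s g = t h \<longrightarrow> m g h \<in> G \<and> s (m g h) = s h \<and> t (m g h) = t g) \<and>
     (\<forall>g\<in>G. \<forall>h\<in>G. \<forall>k\<in>G. s g = t h \<and> s h = t k \<longrightarrow> m (m g h) k = m g (m h k)) \<and>
     (\<forall>g\<in>G. m g (s g) = g \<and> m (t g) g = g) \<and>
     (\<forall>g\<in>G. s (i g) = t g \<and> t (i g) = s g \<and> m g (i g) = t g \<and> m (i g) g = s g)"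

definition objs :: "'g set \<Rightarrow> ('g \<Rightarrow> 'g) \<Rightarrow> 'g set" where
  "objs G s = s ` G"

definition hom :: "'g set \<Rightarrow> ('g \<Rightarrow> 'g) \<Rightarrow> ('g \<Rightarrow> 'g) \<Rightarrow> 'g \<Rightarrow> 'g \<Rightarrow> 'g set" where
  "hom G s t x y = {g\<in>G. s g = x \<and> t g = y}"

definition connected_gpd :: "'g set \<Rightarrow> ('g \<Rightarrow> 'g) \<Rightarrow> ('g \<Rightarrow> 'g) \<Rightarrow> bool" where
  "connected_gpd G s t \<longleftrightarrow> (\<forall>x\<in>objs G s. \<forall>y\<in>objs G s. hom G s t x y \<noteq> {})"

definition subgroupoid ::
  "'g set \<Rightarrow> 'g set \<Rightarrow> ('g \<Rightarrow> 'g) \<Rightarrow> ('g \<Rightarrow> 'g) \<Rightarrow> ('g \<Rightarrow> 'g \<Rightarrow> 'g) \<Rightarrow> ('g \<Rightarrow> 'g) \<Rightarrow> bool" where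
  "subgroupoid H G s t m i \<longleftrightarrow> H \<subseteq> G \<and>
     (\<forall>h\<in>H. s h \<in> H \<and> t h \<in> H \<and> i h \<in> H) \<and>
     (\<forall>g\<in>H. \<forall>h\<in>H. s g = t h \<longrightarrow> m g h \<in> H)"

definition wide_subgroupoid ::
  "'g set \<Rightarrow> 'g set \<Rightarrow> ('g \<Rightarrow> 'g) \<Rightarrow> ('g \<Rightarrow> 'g) \<Rightarrow> ('g \<Rightarrow> 'g \<Rightarrow> 'g) \<Rightarrow> ('g \<Rightarrow> 'g) \<Rightarrow> bool" where
  "wide_subgroupoid H G s t m i \<longleftrightarrow> subgroupoid H G s t m i \<and> objs G s \<subseteq> H"

definition components :: "'g set \<Rightarrow> ('g \<Rightarrow> 'g) \<Rightarrow> ('g \<Rightarrow> 'g) \<Rightarrow> 'g set set" where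
  "components K s t = (\<lambda>x. {y \<in> objs K s. hom K s t x y \<noteq> {}}) ` objs K s"

definition full_sub :: "'g set \<Rightarrow> ('g \<Rightarrow> 'g) \<Rightarrow> ('g \<Rightarrow> 'g) \<Rightarrow> 'g set \<Rightarrow> 'g set" where
  "full_sub K s t Y = {k\<in>K. s k \<in> Y \<and> t k \<in> Y}"

definition Sd :: "('g \<Rightarrow> 'r::comm_ring_1) \<Rightarrow> 'g \<Rightarrow> 'r set" where
  "Sd e g = range (\<lambda>a. a * e g)"

text \<open>A unital partial action (S_g = S 1_g, alpha_g) of G on S = UNIV, where moreover
 S is the direct sum of the ideals S_y, y an object (orthogonal idempotents summing to 1).\<close>
definition unital_partial_action ::
  "'g set \<Rightarrow> ('g \<Rightarrow> 'g) \<Rightarrow> ('g \<Rightarrow> 'g) \<Rightarrow> ('g \<Rightarrow> 'g \<Rightarrow> 'g) \<Rightarrow> ('g \<Rightarrow> 'g)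
     \<Rightarrow> ('g \<Rightarrow> 'r::comm_ring_1) \<Rightarrow> ('g \<Rightarrow> 'r \<Rightarrow> 'r) \<Rightarrow> bool" where
  "unital_partial_action G s t m i e \<alpha> \<longleftrightarrow>
     (\<forall>g\<in>G. e g * e g = e g) \<and>
     (\<forall>g\<in>G. Sd e g \<subseteq> Sd e (t g)) \<and>
     (\<forall>g\<in>G. bij_betw (\<alpha> g) (Sd e (i g)) (Sd e g) \<and>
        (\<forall>a\<in>Sd e (i g). \<forall>b\<in>Sd e (i g).
            \<alpha> g (a + b) = \<alpha> g a + \<alpha> g b \<and> \<alpha> g (a * b) = \<alpha> g a * \<alpha> g b)) \<and>
     (\<forall>x\<in>objs G s. \<forall>a\<in>Sd e x. \<alpha> x a = a) \<and>
     (\<forall>g\<in>G. \<forall>h\<in>G. s g = t h \<longrightarrow>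
        (\<forall>a\<in>Sd e (i h). \<alpha> h a \<in> Sd e (i g) \<inter> Sd e h \<longrightarrow>
            a \<in> Sd e (i (m g h)) \<and> \<alpha> g (\<alpha> h a) = \<alpha> (m g h) a)) \<and>
     (\<forall>x\<in>objs G s. \<forall>y\<in>objs G s. x \<noteq> y \<longrightarrow> e x * e y = 0) \<and>
     (\<Sum>y\<in>objs G s. e y) = 1"

definition group_type_conn ::
  "'g set \<Rightarrow> ('g \<Rightarrow> 'g) \<Rightarrow> ('g \<Rightarrow> 'g) \<Rightarrow> ('g \<Rightarrow> 'g) \<Rightarrow> ('g \<Rightarrow> 'r::comm_ring_1) \<Rightarrow> bool" where
  "group_type_conn K s t i e \<longleftrightarrow>
     (\<exists>x\<in>objs K s. \<exists>\<tau>. \<tau> x = x \<and>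
        (\<forall>y\<in>objs K s. \<tau> y \<in> hom K s t x y \<and>
            Sd e (i (\<tau> y)) = Sd e x \<and> Sd e (\<tau> y) = Sd e y))"

definition group_type ::
  "'g set \<Rightarrow> ('g \<Rightarrow> 'g) \<Rightarrow> ('g \<Rightarrow> 'g) \<Rightarrow> ('g \<Rightarrow> 'g) \<Rightarrow> ('g \<Rightarrow> 'r::comm_ring_1) \<Rightarrow> bool" where
  "group_type K s t i e \<longleftrightarrow>
     (\<forall>Y\<in>components K s t. group_type_conn (full_sub K s t Y) s t i e)"

definition wSub ::
  "'g set \<Rightarrow> ('g \<Rightarrow> 'g) \<Rightarrow> ('g \<Rightarrow> 'g) \<Rightarrow> ('g \<Rightarrow> 'g \<Rightarrow> 'g) \<Rightarrow> ('g \<Rightarrow> 'g)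
     \<Rightarrow> ('g \<Rightarrow> 'r::comm_ring_1) \<Rightarrow> 'g set set" where
  "wSub G s t m i e = {H. wide_subgroupoid H G s t m i \<and> group_type H s t i e}"

definition invariants ::
  "'r set \<Rightarrow> 'g set \<Rightarrow> ('g \<Rightarrow> 'g) \<Rightarrow> ('g \<Rightarrow> 'r::comm_ring_1) \<Rightarrow> ('g \<Rightarrow> 'r \<Rightarrow> 'r) \<Rightarrow> 'r set" where
  "invariants A K i e \<alpha> = {a\<in>A. \<forall>k\<in>K. \<alpha> k (a * e (i k)) = a * e k}"

text \<open>Elements of the free abelian group on C x C are functions 'r x 'r => int (finitely
 supported). The subgroup N generated by the bilinearity and B-balancedness relations,
 so that the quotient is C \<otimes>_B C.\<close>
definition delta :: "'r \<times> 'r \<Rightarrow> 'r \<times> 'r \<Rightarrow> int" where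
  "delta p = (\<lambda>q. if q = p then 1 else 0)"

inductive_set tensor_rel :: "'r::comm_ring_1 set \<Rightarrow> 'r set \<Rightarrow> ('r \<times> 'r \<Rightarrow> int) set"
  for B C :: "'r set" where
  zero: "(\<lambda>_. 0) \<in> tensor_rel B C"
| add_l: "\<lbrakk>a \<in> C; a' \<in> C; b \<in> C\<rbrakk> \<Longrightarrow>
     (\<lambda>q. delta (a + a', b) q - delta (a, b) q - delta (a', b) q) \<in> tensor_rel B C"
| add_r: "\<lbrakk>a \<in> C; b \<in> C; b' \<in> C\<rbrakk> \<Longrightarrow>
     (\<lambda>q. delta (a, b + b') q - delta (a, b) q - delta (a, b') q) \<in> tensor_rel B C"
| bal: "\<lbrakk>a \<in> C; b \<in> C; r \<in> B\<rbrakk> \<Longrightarrow>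
     (\<lambda>q. delta (a * r, b) q - delta (a, r * b) q) \<in> tensor_rel B C"
| diff: "\<lbrakk>x \<in> tensor_rel B C; y \<in> tensor_rel B C\<rbrakk> \<Longrightarrow> (\<lambda>q. x q - y q) \<in> tensor_rel B C"

definition fsum :: "('r \<times> 'r) list \<Rightarrow> 'r \<times> 'r \<Rightarrow> int" where
  "fsum xs = (\<lambda>q. (\<Sum>p\<leftarrow>xs. delta p q))"

text \<open>B \<subseteq> C (with unit u of C) is separable iff there is e = sum of a_k \<otimes> b_k in
 C \<otimes>_B C with c e = e c for all c in C and m(e) = u.  (Every element of C \<otimes>_B C is
 a finite sum of simple tensors.)\<close>
definition separable :: "'r::comm_ring_1 set \<Rightarrow> 'r set \<Rightarrow> 'r \<Rightarrow> bool" where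
  "separable B C u \<longleftrightarrow>
     (\<exists>xs. set xs \<subseteq> C \<times> C \<and> (\<Sum>(a, b)\<leftarrow>xs. a * b) = u \<and>
        (\<forall>c\<in>C. (\<lambda>q. fsum (map (\<lambda>(a, b). (c * a, b)) xs) q
                    - fsum (map (\<lambda>(a, b). (a, b * c)) xs) q) \<in> tensor_rel B C))"

end

theory Submission
  imports Defs
begin

(* If every component Y of a wide subgroupoid K is of group type, any two objects y, z of Y are
   joined by a morphism g of K with S_{g^-1} = S_y and S_g = S_z. Transport along such morphisms
   shows that restriction a |-> a 1_y is a ring isomorphism from the K-invariants supported on Y
   onto S_y^{K(y)}, with inverse b |-> sum_z alpha_{g_z}(b). For K = H this splits T into the
   product of the T_{y_j}; for the connected G it gives R 1_y = R_y. A separability idempotent is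
   carried along any ring map compatible with the base rings: restriction gives the forward
   implication, and for the converse the lifts of the separability idempotents of the
   R_{y_j} <= T_{y_j} add up to the sum of the lifts of the 1_{y_j}, which is 1. *)

section \<open>Formal tensors and separability\<close>

definition formal_support :: "('r \<times> 'r \<Rightarrow> int) \<Rightarrow> ('r \<times> 'r) set" where
  "formal_support x = {p. x p \<noteq> 0}"

definition map_formal ::
  "('r \<Rightarrow> 'r) \<Rightarrow> ('r \<times> 'r) set \<Rightarrow> ('r \<times> 'r \<Rightarrow> int) \<Rightarrow> 'r \<times> 'r \<Rightarrow> int" where
  "map_formal F A x = (\<lambda>q. \<Sum>p\<in>A. if (F (fst p), F (snd p)) = q then x p else 0)"

lemma map_formal_on_superset:
  assumes "finite A" "formal_support x \<subseteq> A"
  shows "finite (formal_support x)" "map_formal F (formal_support x) x = map_formal F A x"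
proof -
  show "finite (formal_support x)" using finite_subset[OF assms(2,1)] .
  show "map_formal F (formal_support x) x = map_formal F A x"
    unfolding map_formal_def fun_eq_iff
    by (intro allI sum.mono_neutral_left[OF assms]) (auto simp: formal_support_def)
qed

lemma map_formal_diff:
  "map_formal F A (\<lambda>q. x q - y q) = (\<lambda>q. map_formal F A x q - map_formal F A y q)"
  unfolding map_formal_def by (auto simp: sum_subtractf[symmetric] intro!: sum.cong)

lemma map_formal_add:
  "map_formal F A (\<lambda>q. x q + y q) = (\<lambda>q. map_formal F A x q + map_formal F A y q)"
  unfolding map_formal_def by (auto simp: sum.distrib[symmetric] intro!: sum.cong)

lemma map_formal_zero: "map_formal F A (\<lambda>_. 0) = (\<lambda>_. 0)"
  unfolding map_formal_def by auto

lemma map_formal_delta: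
  assumes "finite A" "p \<in> A"
  shows "map_formal F A (delta p) = delta (F (fst p), F (snd p))"
proof
  fix q
  have "map_formal F A (delta p) q
      = (\<Sum>p'\<in>A. if p' = p then (if (F (fst p), F (snd p)) = q then 1 else 0) else 0)"
    unfolding map_formal_def delta_def by (rule sum.cong) auto
  then show "map_formal F A (delta p) q = delta (F (fst p), F (snd p)) q"
    using assms unfolding delta_def by (simp add: sum.delta)
qed

lemma tensor_rel_add:
  assumes "x \<in> tensor_rel B C" "y \<in> tensor_rel B C"
  shows "(\<lambda>q. x q + y q) \<in> tensor_rel B C"
  using tensor_rel.diff[OF assms(1) tensor_rel.diff[OF tensor_rel.zero assms(2)]] by simp

lemma tensor_rel_map_formal:
  assumes FC: "F ` C \<subseteq> C'"
    and F_add: "\<forall>a\<in>C. \<forall>b\<in>C. F (a + b) = F a + F b"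
    and F_bal: "\<forall>r\<in>B. \<exists>r'\<in>B'. \<forall>a\<in>C. F (r * a) = r' * F a"
  shows "x \<in> tensor_rel B C \<Longrightarrow>
    finite (formal_support x) \<and> map_formal F (formal_support x) x \<in> tensor_rel B' C'"
proof (induction x rule: tensor_rel.induct)
  case zero
  then show ?case by (simp add: formal_support_def map_formal_def tensor_rel.zero)
next
  case (add_l a a' b)
  let ?A = "{(a + a', b), (a, b), (a', b)}"
  have "formal_support (\<lambda>q. delta (a + a', b) q - delta (a, b) q - delta (a', b) q) \<subseteq> ?A"
    unfolding formal_support_def delta_def by auto
  from map_formal_on_superset[OF _ this] show ?case
    using add_l F_add FC tensor_rel.add_l[where a="F a" and a'="F a'" and b="F b" and B=B' and C=C']
    by (auto simp: map_formal_diff map_formal_delta image_subset_iff)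
next
  case (add_r a b b')
  let ?A = "{(a, b + b'), (a, b), (a, b')}"
  have "formal_support (\<lambda>q. delta (a, b + b') q - delta (a, b) q - delta (a, b') q) \<subseteq> ?A"
    unfolding formal_support_def delta_def by auto
  from map_formal_on_superset[OF _ this] show ?case
    using add_r F_add FC tensor_rel.add_r[where a="F a" and b="F b" and b'="F b'" and B=B' and C=C']
    by (auto simp: map_formal_diff map_formal_delta image_subset_iff)
next
  case (bal a b r)
  let ?A = "{(a * r, b), (a, r * b)}"
  obtain r' where r': "r' \<in> B'" "\<forall>c\<in>C. F (r * c) = r' * F c"
    using F_bal bal by blast
  have "formal_support (\<lambda>q. delta (a * r, b) q - delta (a, r * b) q) \<subseteq> ?A"
    unfolding formal_support_def delta_def by auto
  from map_formal_on_superset[OF _ this] show ?case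
    using bal r' FC tensor_rel.bal[where a="F a" and b="F b" and r=r' and B=B' and C=C']
    by (auto simp: map_formal_diff map_formal_delta mult.commute)
next
  case (diff x y)
  let ?A = "formal_support x \<union> formal_support y"
  have fin: "finite ?A" using diff by auto
  have "formal_support (\<lambda>q. x q - y q) \<subseteq> ?A" unfolding formal_support_def by auto
  from map_formal_on_superset[OF fin this] show ?case
    using map_formal_on_superset(2)[OF fin, of x F] map_formal_on_superset(2)[OF fin, of y F] diff
    by (simp add: map_formal_diff tensor_rel.diff)
qed

lemma fsum_Nil: "fsum [] = (\<lambda>_. 0)"
  by (simp add: fsum_def)

lemma fsum_Cons: "fsum (p # xs) = (\<lambda>q. delta p q + fsum xs q)"
  by (simp add: fsum_def)

lemma fsum_append: "fsum (xs @ ys) = (\<lambda>q. fsum xs q + fsum ys q)"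
  by (simp add: fsum_def)

lemma formal_support_fsum: "formal_support (fsum xs) \<subseteq> set xs"
  by (induction xs) (auto simp: fsum_Nil fsum_Cons formal_support_def delta_def)

lemma map_formal_fsum:
  assumes "finite A" "set xs \<subseteq> A"
  shows "map_formal F A (fsum xs) = fsum (map (\<lambda>(a, b). (F a, F b)) xs)"
  using assms(2)
proof (induction xs)
  case Nil
  then show ?case by (simp add: fsum_Nil map_formal_zero)
next
  case (Cons p xs)
  then show ?case using assms(1)
    by (cases p) (simp add: fsum_Cons map_formal_add map_formal_delta)
qed

text \<open>c e - e c for e = \<Sum> a \<otimes> b, as a formal combination of pairs.\<close>
definition comm_defect :: "'r::comm_ring_1 \<Rightarrow> ('r \<times> 'r) list \<Rightarrow> 'r \<times> 'r \<Rightarrow> int" where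
  "comm_defect c xs =
     (\<lambda>q. fsum (map (\<lambda>(a, b). (c * a, b)) xs) q - fsum (map (\<lambda>(a, b). (a, b * c)) xs) q)"

lemma separable_iff_comm_defect: "separable B C u \<longleftrightarrow>
   (\<exists>xs. set xs \<subseteq> C \<times> C \<and> (\<Sum>(a, b)\<leftarrow>xs. a * b) = u \<and>
      (\<forall>c\<in>C. comm_defect c xs \<in> tensor_rel B C))"
  unfolding separable_def comm_defect_def by simp

lemma separable_zero: "separable B C 0"
  unfolding separable_iff_comm_defect comm_defect_def
  by (auto simp: fsum_Nil tensor_rel.zero intro: exI[of _ "[]"])

lemma separable_add:
  assumes "separable B C u" "separable B C v"
  shows "separable B C (u + v)"
proof -
  obtain xs ys where "set xs \<subseteq> C \<times> C" "(\<Sum>(a, b)\<leftarrow>xs. a * b) = u"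
      "\<forall>c\<in>C. comm_defect c xs \<in> tensor_rel B C"
    and "set ys \<subseteq> C \<times> C" "(\<Sum>(a, b)\<leftarrow>ys. a * b) = v"
      "\<forall>c\<in>C. comm_defect c ys \<in> tensor_rel B C"
    using assms unfolding separable_iff_comm_defect by blast
  moreover have "comm_defect c (xs @ ys) = (\<lambda>q. comm_defect c xs q + comm_defect c ys q)" for c
    by (simp add: comm_defect_def fsum_append fun_eq_iff)
  ultimately show ?thesis
    unfolding separable_iff_comm_defect by (auto intro!: exI[of _ "xs @ ys"] tensor_rel_add)
qed

lemma separable_sum:
  assumes "finite A" "\<forall>a\<in>A. separable B C (u a)"
  shows "separable B C (\<Sum>a\<in>A. u a)"
  using assms by (induction A rule: finite_induct) (auto intro: separable_zero separable_add)

lemma sum_list_mult_hom: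
  assumes "set xs \<subseteq> C \<times> C" "0 \<in> C"
    and "\<forall>a\<in>C. \<forall>b\<in>C. a + b \<in> C" "\<forall>a\<in>C. \<forall>b\<in>C. a * b \<in> C"
    and "F 0 = 0" "\<forall>a\<in>C. \<forall>b\<in>C. F (a + b) = F a + F b" "\<forall>a\<in>C. \<forall>b\<in>C. F (a * b) = F a * F b"
  shows "(\<Sum>(a, b)\<leftarrow>xs. a * b) \<in> C \<and> F (\<Sum>(a, b)\<leftarrow>xs. a * b) = (\<Sum>(a, b)\<leftarrow>xs. F a * F b)"
  using assms(1) by (induction xs) (use assms(2-) in auto)

lemma map_formal_comm_defect:
  assumes xs: "set xs \<subseteq> C \<times> C" and c: "\<forall>a\<in>C. F (c * a) = c' * F a"
  shows "map_formal F (formal_support (comm_defect c xs)) (comm_defect c xs)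
    = comm_defect c' (map (\<lambda>(a, b). (F a, F b)) xs)"
proof -
  let ?L = "map (\<lambda>(a, b). (c * a, b)) xs" and ?R = "map (\<lambda>(a, b). (a, b * c)) xs"
  let ?A = "set ?L \<union> set ?R"
  have "formal_support (comm_defect c xs) \<subseteq> formal_support (fsum ?L) \<union> formal_support (fsum ?R)"
    unfolding comm_defect_def formal_support_def by auto
  then have supp: "formal_support (comm_defect c xs) \<subseteq> ?A"
    using formal_support_fsum[of ?L] formal_support_fsum[of ?R] by blast
  let ?D = "comm_defect c xs" and ?FF = "\<lambda>(a, b). (F a, F b)"
  have "map_formal F (formal_support ?D) ?D = map_formal F ?A ?D"
    using map_formal_on_superset(2)[OF _ supp] by simp
  also have "\<dots> = (\<lambda>q. fsum (map ?FF ?L) q - fsum (map ?FF ?R) q)"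
    unfolding comm_defect_def map_formal_diff
    using map_formal_fsum[of ?A ?L F] map_formal_fsum[of ?A ?R F] by simp
  also have "map ?FF ?L = map (\<lambda>(a, b). (c' * a, b)) (map ?FF xs)"
    using xs c by auto
  also have "map ?FF ?R = map (\<lambda>(a, b). (a, b * c')) (map ?FF xs)"
    using xs c by (auto simp: mult.commute)
  finally show ?thesis unfolding comm_defect_def .
qed

lemma separable_transfer:
  fixes F :: "'r::comm_ring_1 \<Rightarrow> 'r"
  assumes sep: "separable B C u"
    and C_0: "0 \<in> C" and C_add: "\<forall>a\<in>C. \<forall>b\<in>C. a + b \<in> C" and C_mult: "\<forall>a\<in>C. \<forall>b\<in>C. a * b \<in> C"
    and FC: "F ` C \<subseteq> C'" and F_0: "F 0 = 0"
    and F_add: "\<forall>a\<in>C. \<forall>b\<in>C. F (a + b) = F a + F b"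
    and F_mult: "\<forall>a\<in>C. \<forall>b\<in>C. F (a * b) = F a * F b"
    and F_bal: "\<forall>r\<in>B. \<exists>r'\<in>B'. \<forall>a\<in>C. F (r * a) = r' * F a"
  shows "\<exists>ys. set ys \<subseteq> C' \<times> C' \<and> (\<Sum>(a, b)\<leftarrow>ys. a * b) = F u \<and>
     (\<forall>c\<in>C. \<forall>c'. (\<forall>a\<in>C. F (c * a) = c' * F a) \<longrightarrow> comm_defect c' ys \<in> tensor_rel B' C')"
proof -
  obtain xs where xs: "set xs \<subseteq> C \<times> C" "(\<Sum>(a, b)\<leftarrow>xs. a * b) = u"
    "\<forall>c\<in>C. comm_defect c xs \<in> tensor_rel B C"
    using sep unfolding separable_iff_comm_defect by blast
  define ys where "ys = map (\<lambda>(a, b). (F a, F b)) xs"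
  have "set ys \<subseteq> C' \<times> C'" using xs(1) FC unfolding ys_def by auto
  moreover have "(\<Sum>(a, b)\<leftarrow>ys. a * b) = F u"
    using sum_list_mult_hom[OF xs(1) C_0 C_add C_mult F_0 F_add F_mult] xs(2)
    unfolding ys_def by (simp add: split_def comp_def)
  moreover have "comm_defect c' ys \<in> tensor_rel B' C'"
    if "c \<in> C" "\<forall>a\<in>C. F (c * a) = c' * F a" for c c'
  proof -
    have "comm_defect c xs \<in> tensor_rel B C" using xs(3) that(1) by blast
    then have "map_formal F (formal_support (comm_defect c xs)) (comm_defect c xs) \<in> tensor_rel B' C'"
      using tensor_rel_map_formal[OF FC F_add F_bal] by blast
    then show ?thesis unfolding ys_def map_formal_comm_defect[OF xs(1) that(2)] .
  qed
  ultimately show ?thesis by blast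
qed

section \<open>Unital partial actions of finite groupoids\<close>

locale partial_action =
  fixes G :: "'g set" and s t i :: "'g \<Rightarrow> 'g" and m :: "'g \<Rightarrow> 'g \<Rightarrow> 'g"
    and e :: "'g \<Rightarrow> 'r::comm_ring_1" and \<alpha> :: "'g \<Rightarrow> 'r \<Rightarrow> 'r"
  assumes groupoid: "groupoid G s t m i"
    and action: "unital_partial_action G s t m i e \<alpha>"
    and finite_G: "finite G"
begin

lemma s_in: "g \<in> G \<Longrightarrow> s g \<in> G"
  and t_in: "g \<in> G \<Longrightarrow> t g \<in> G"
  and i_in: "g \<in> G \<Longrightarrow> i g \<in> G"
  using groupoid unfolding groupoid_def by auto

lemma s_s: "g \<in> G \<Longrightarrow> s (s g) = s g"
  and t_s: "g \<in> G \<Longrightarrow> t (s g) = s g"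
  and s_t: "g \<in> G \<Longrightarrow> s (t g) = t g"
  using groupoid unfolding groupoid_def by auto

lemma m_in: "g \<in> G \<Longrightarrow> h \<in> G \<Longrightarrow> s g = t h \<Longrightarrow> m g h \<in> G"
  and s_m: "g \<in> G \<Longrightarrow> h \<in> G \<Longrightarrow> s g = t h \<Longrightarrow> s (m g h) = s h"
  and t_m: "g \<in> G \<Longrightarrow> h \<in> G \<Longrightarrow> s g = t h \<Longrightarrow> t (m g h) = t g"
  using groupoid unfolding groupoid_def by auto

lemma m_assoc:
  "g \<in> G \<Longrightarrow> h \<in> G \<Longrightarrow> k \<in> G \<Longrightarrow> s g = t h \<Longrightarrow> s h = t k \<Longrightarrow> m (m g h) k = m g (m h k)"
  using groupoid unfolding groupoid_def by blast

lemma m_s_right: "g \<in> G \<Longrightarrow> m g (s g) = g"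
  and m_t_left: "g \<in> G \<Longrightarrow> m (t g) g = g"
  using groupoid unfolding groupoid_def by auto

lemma s_i: "g \<in> G \<Longrightarrow> s (i g) = t g"
  and t_i: "g \<in> G \<Longrightarrow> t (i g) = s g"
  and m_i_left: "g \<in> G \<Longrightarrow> m (i g) g = s g"
  using groupoid unfolding groupoid_def by auto

lemma i_i: assumes g: "g \<in> G" shows "i (i g) = g"
proof -
  have ig: "i g \<in> G" "i (i g) \<in> G" using i_in g by auto
  have "i (i g) = m (i (i g)) (s (i (i g)))" using m_s_right ig by simp
  also have "s (i (i g)) = m (i g) g" using s_i t_i m_i_left ig g by simp
  also have "m (i (i g)) (m (i g) g) = m (m (i (i g)) (i g)) g"
    using m_assoc[of "i (i g)" "i g" g] ig g s_i by simp
  also have "m (i (i g)) (i g) = t g" using m_i_left s_i ig g by simp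
  also have "m (t g) g = g" using m_t_left g by simp
  finally show ?thesis .
qed

lemma obj_iff: "x \<in> objs G s \<longleftrightarrow> x \<in> G \<and> s x = x"
  unfolding objs_def using s_in s_s by (auto intro: image_eqI[where x=x])

lemma t_obj: "x \<in> objs G s \<Longrightarrow> t x = x"
  using obj_iff t_s by metis

lemma s_in_objs: "g \<in> G \<Longrightarrow> s g \<in> objs G s"
  and t_in_objs: "g \<in> G \<Longrightarrow> t g \<in> objs G s"
  using obj_iff s_in t_in s_s s_t by auto

lemma finite_objs: "finite (objs G s)"
  unfolding objs_def using finite_G by simp

lemma e_idem: "g \<in> G \<Longrightarrow> e g * e g = e g"
  using action unfolding unital_partial_action_def by auto

lemma Sd_iff: "g \<in> G \<Longrightarrow> a \<in> Sd e g \<longleftrightarrow> a * e g = a"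
  unfolding Sd_def using e_idem by (auto simp: mult.assoc intro: range_eqI[where x=a])

lemma Sd_subset_t: "g \<in> G \<Longrightarrow> Sd e g \<subseteq> Sd e (t g)"
  using action unfolding unital_partial_action_def by auto

lemma e_in_Sd: "g \<in> G \<Longrightarrow> e g \<in> Sd e g"
  using Sd_iff e_idem by simp

lemma Sd_mult: "g \<in> G \<Longrightarrow> a \<in> Sd e g \<Longrightarrow> b * a \<in> Sd e g"
  by (simp add: Sd_iff mult.assoc)

lemma Sd_eq_imp_e_eq: "g \<in> G \<Longrightarrow> h \<in> G \<Longrightarrow> Sd e g = Sd e h \<Longrightarrow> e g = e h"
  by (metis Sd_iff e_in_Sd mult.commute)

lemma e_mult_e_s: "k \<in> G \<Longrightarrow> e (i k) * e (s k) = e (i k)"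
  and e_mult_e_t: "k \<in> G \<Longrightarrow> e k * e (t k) = e k"
  using Sd_subset_t e_in_Sd Sd_iff i_in t_in t_i by (metis subsetD)+

lemma \<alpha>_bij: "g \<in> G \<Longrightarrow> bij_betw (\<alpha> g) (Sd e (i g)) (Sd e g)"
  using action unfolding unital_partial_action_def by auto

lemma \<alpha>_in_Sd: "g \<in> G \<Longrightarrow> a \<in> Sd e (i g) \<Longrightarrow> \<alpha> g a \<in> Sd e g"
  using \<alpha>_bij bij_betw_apply by metis

lemma \<alpha>_add: "g \<in> G \<Longrightarrow> a \<in> Sd e (i g) \<Longrightarrow> b \<in> Sd e (i g) \<Longrightarrow> \<alpha> g (a + b) = \<alpha> g a + \<alpha> g b"
  and \<alpha>_mult: "g \<in> G \<Longrightarrow> a \<in> Sd e (i g) \<Longrightarrow> b \<in> Sd e (i g) \<Longrightarrow> \<alpha> g (a * b) = \<alpha> g a * \<alpha> g b"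
  using action unfolding unital_partial_action_def by auto

lemma \<alpha>_zero: "g \<in> G \<Longrightarrow> \<alpha> g 0 = 0"
  using \<alpha>_add[of g 0 0] by (simp add: Sd_def range_eqI[where x=0])

lemma \<alpha>_diff:
  assumes g: "g \<in> G" and a: "a \<in> Sd e (i g)" and b: "b \<in> Sd e (i g)"
  shows "\<alpha> g (a - b) = \<alpha> g a - \<alpha> g b"
proof -
  have "a - b \<in> Sd e (i g)" using a b Sd_iff i_in g by (simp add: left_diff_distrib)
  then show ?thesis using \<alpha>_add[OF g _ b, of "a - b"] by (simp add: algebra_simps)
qed

lemma \<alpha>_unit: assumes g: "g \<in> G" shows "\<alpha> g (e (i g)) = e g"
proof -
  have ig: "i g \<in> G" using i_in g by auto
  obtain x where x: "x \<in> Sd e (i g)" "\<alpha> g x = e g"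
    using \<alpha>_bij[OF g] e_in_Sd[OF g] unfolding bij_betw_def by force
  have "e g = \<alpha> g (x * e (i g))" using x Sd_iff ig by simp
  also have "\<dots> = e g * \<alpha> g (e (i g))" using \<alpha>_mult[OF g x(1) e_in_Sd[OF ig]] x by simp
  also have "\<dots> = \<alpha> g (e (i g))" using \<alpha>_in_Sd[OF g e_in_Sd[OF ig]] Sd_iff g by (simp add: mult.commute)
  finally show ?thesis by simp
qed

lemma \<alpha>_m: "g \<in> G \<Longrightarrow> h \<in> G \<Longrightarrow> s g = t h \<Longrightarrow> a \<in> Sd e (i h) \<Longrightarrow> \<alpha> h a \<in> Sd e (i g) \<Longrightarrow>
   a \<in> Sd e (i (m g h)) \<and> \<alpha> g (\<alpha> h a) = \<alpha> (m g h) a"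
  using action \<alpha>_in_Sd unfolding unital_partial_action_def by blast

lemma \<alpha>_obj: "x \<in> objs G s \<Longrightarrow> a \<in> Sd e x \<Longrightarrow> \<alpha> x a = a"
  using action unfolding unital_partial_action_def by auto

lemma e_orth: "x \<in> objs G s \<Longrightarrow> y \<in> objs G s \<Longrightarrow> x \<noteq> y \<Longrightarrow> e x * e y = 0"
  using action unfolding unital_partial_action_def by auto

lemma sum_e_objs: "(\<Sum>y\<in>objs G s. e y) = 1"
  using action unfolding unital_partial_action_def by auto

lemma eq_0_if_mult_e_objs: "(\<And>z. z \<in> objs G s \<Longrightarrow> a * e z = 0) \<Longrightarrow> a = 0"
  using sum_e_objs sum_distrib_left[of a e "objs G s"] by simp

lemma sum_mult_e_obj:
  assumes Y: "Y \<subseteq> objs G s" "finite Y" and f: "\<And>z. z \<in> Y \<Longrightarrow> f z \<in> Sd e z"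
    and w: "w \<in> objs G s"
  shows "(\<Sum>z\<in>Y. f z) * e w = (if w \<in> Y then f w else 0)"
proof -
  have "f z * e w = (if z = w then f w else 0)" if z: "z \<in> Y" for z
  proof -
    have fz: "f z * e z = f z" using f[OF z] Sd_iff Y(1) z obj_iff by blast
    show ?thesis
    proof (cases "z = w")
      case False
      then have "f z * e w = f z * (e z * e w)" using fz by (metis mult.assoc)
      then show ?thesis using e_orth w False Y(1) z by auto
    qed (use fz in simp)
  qed
  then have "(\<Sum>z\<in>Y. f z) * e w = (\<Sum>z\<in>Y. if z = w then f w else 0)"
    by (simp add: sum_distrib_right)
  then show ?thesis using Y(2) by (simp add: sum.delta')
qed

lemma \<alpha>_i_\<alpha>: assumes g: "g \<in> G" and a: "a \<in> Sd e (i g)" shows "\<alpha> (i g) (\<alpha> g a) = a"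
proof -
  have ig: "i g \<in> G" using i_in g by auto
  have "\<alpha> g a \<in> Sd e (i (i g))" using \<alpha>_in_Sd[OF g a] i_i g by simp
  from \<alpha>_m[OF ig g _ a this] have "\<alpha> (i g) (\<alpha> g a) = \<alpha> (m (i g) g) a" using s_i g i_i by simp
  also have "\<dots> = a"
    using \<alpha>_obj s_in_objs g m_i_left Sd_subset_t[OF ig] a t_i by auto
  finally show ?thesis .
qed

lemma \<alpha>_\<alpha>_i: assumes g: "g \<in> G" and a: "a \<in> Sd e g" shows "\<alpha> g (\<alpha> (i g) a) = a"
  using \<alpha>_i_\<alpha>[of "i g" a] i_in g a i_i by simp

lemma wide_subgroupoid_self: "wide_subgroupoid G G s t m i"
  unfolding wide_subgroupoid_def subgroupoid_def using s_in t_in i_in m_in obj_iff by auto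

text \<open>Morphisms g with S_{g^{-1}} = S_{s g} and S_g = S_{t g}: their \<alpha>_g is an isomorphism
  S_{s g} \<cong> S_{t g}, and the group-type hypothesis provides them.\<close>
definition full :: "'g \<Rightarrow> bool" where
  "full g \<longleftrightarrow> g \<in> G \<and> Sd e (i g) = Sd e (s g) \<and> Sd e g = Sd e (t g)"

lemma full_e: "full g \<Longrightarrow> e (i g) = e (s g) \<and> e g = e (t g)"
  unfolding full_def using Sd_eq_imp_e_eq i_in s_in t_in by blast

lemma full_i: "full g \<Longrightarrow> full (i g)"
  unfolding full_def using i_i i_in s_i t_i by auto

lemma full_m:
  assumes fg: "full g" and fh: "full h" and gh: "s g = t h"
  shows "full (m g h)"
proof -
  have g: "g \<in> G" and h: "h \<in> G" using fg fh full_def by auto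
  have ig: "i g \<in> G" and ih: "i h \<in> G" using i_in g h by auto
  have gh': "m g h \<in> G" using m_in g h gh by auto
  have Dg: "Sd e (i g) = Sd e (s g)" "Sd e g = Sd e (t g)" using fg full_def by auto
  have Dh: "Sd e (i h) = Sd e (s h)" "Sd e h = Sd e (t h)" using fh full_def by auto
  have "Sd e (s (m g h)) \<subseteq> Sd e (i (m g h))"
  proof
    fix a assume "a \<in> Sd e (s (m g h))"
    then have a: "a \<in> Sd e (i h)" using s_m g h gh Dh by simp
    have "\<alpha> h a \<in> Sd e (i g)" using \<alpha>_in_Sd[OF h a] Dh Dg gh by simp
    then show "a \<in> Sd e (i (m g h))" using \<alpha>_m[OF g h gh a] by blast
  qed
  then have A: "Sd e (i (m g h)) = Sd e (s (m g h))"
    using Sd_subset_t[OF i_in[OF gh']] t_i[OF gh'] by auto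
  have "Sd e (t (m g h)) \<subseteq> Sd e (m g h)"
  proof
    fix b assume "b \<in> Sd e (t (m g h))"
    then have b: "b \<in> Sd e g" using t_m g h gh Dg by simp
    define a1 where "a1 = \<alpha> (i g) b"
    have a1: "a1 \<in> Sd e (i g)" using \<alpha>_in_Sd[OF ig] b i_i g unfolding a1_def by simp
    then have a1h: "a1 \<in> Sd e h" using Dg Dh gh by simp
    define a0 where "a0 = \<alpha> (i h) a1"
    have a0: "a0 \<in> Sd e (i h)" using \<alpha>_in_Sd[OF ih] a1h i_i h unfolding a0_def by simp
    have ha0: "\<alpha> h a0 = a1" using \<alpha>_\<alpha>_i[OF h a1h] a0_def by simp
    have "a0 \<in> Sd e (i (m g h))" "b = \<alpha> (m g h) a0"
      using \<alpha>_m[OF g h gh a0] ha0 a1 \<alpha>_\<alpha>_i[OF g b] a1_def by auto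
    then show "b \<in> Sd e (m g h)" using \<alpha>_in_Sd[OF gh'] by simp
  qed
  then have B: "Sd e (m g h) = Sd e (t (m g h))" using Sd_subset_t[OF gh'] by auto
  show ?thesis using A B gh' full_def by auto
qed

text \<open>For full gu : y \<rightarrow> u and gv : y \<rightarrow> v, the action of k : u \<rightarrow> v on the transported
  element \<alpha>_gu b is the transport along gv of the action of the loop h = gv\<inverse> k gu at y.\<close>
lemma \<alpha>_conj_full:
  assumes fu: "full gu" and fv: "full gv" and k: "k \<in> G"
    and y: "s gu = s gv" and u: "t gu = s k" and v: "t gv = t k"
    and b: "b \<in> Sd e (s gu)"
  defines "h \<equiv> m (i gv) (m k gu)" and "b' \<equiv> \<alpha> (i gu) (e (i k))"
  shows "b * b' \<in> Sd e (i h) \<and> \<alpha> k (\<alpha> gu b * e (i k)) = \<alpha> gv (\<alpha> h (b * b'))"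
proof -
  have gu: "gu \<in> G" and gv: "gv \<in> G" using fu fv full_def by auto
  have igu: "i gu \<in> G" and igv: "i gv \<in> G" and ik: "i k \<in> G" using i_in gu gv k by auto
  have Du: "Sd e (i gu) = Sd e (s gu)" "Sd e gu = Sd e (t gu)" using fu full_def by auto
  have Dv: "Sd e (i gv) = Sd e (s gv)" "Sd e gv = Sd e (t gv)" using fv full_def by auto
  have eik: "e (i k) \<in> Sd e (i (i gu))"
    using Sd_subset_t[OF ik] e_in_Sd[OF ik] t_i[OF k] i_i[OF gu] Du u by auto
  have b': "b' \<in> Sd e (i gu)" using \<alpha>_in_Sd[OF igu eik] i_i[OF gu] unfolding b'_def by simp
  have bi: "b \<in> Sd e (i gu)" using b Du by simp
  have ab: "b * b' \<in> Sd e (i gu)" using Sd_mult[OF igu b'] by (simp add: mult.commute)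
  have gub': "\<alpha> gu b' = e (i k)" using \<alpha>_i_\<alpha>[OF igu] eik i_i[OF gu] unfolding b'_def by simp
  have m1: "\<alpha> gu (b * b') = \<alpha> gu b * e (i k)" using \<alpha>_mult[OF gu bi b'] gub' by simp
  have in1: "\<alpha> gu (b * b') \<in> Sd e (i k)"
    using m1 Sd_mult[OF ik e_in_Sd[OF ik]] by simp
  have kgu: "m k gu \<in> G" using m_in k gu u by simp
  from \<alpha>_m[OF k gu u[symmetric] ab in1]
  have c1: "b * b' \<in> Sd e (i (m k gu))" "\<alpha> k (\<alpha> gu (b * b')) = \<alpha> (m k gu) (b * b')" by auto
  have sv: "s (i gv) = t (m k gu)" using s_i gv t_m k gu u v by simp
  have "\<alpha> (m k gu) (b * b') \<in> Sd e (t (m k gu))" using \<alpha>_in_Sd[OF kgu c1(1)] Sd_subset_t[OF kgu] by auto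
  then have in2: "\<alpha> (m k gu) (b * b') \<in> Sd e (i (i gv))"
    using i_i[OF gv] Dv t_m k gu u v by simp
  from \<alpha>_m[OF igv kgu sv c1(1) in2]
  have c2: "b * b' \<in> Sd e (i h)" "\<alpha> (i gv) (\<alpha> (m k gu) (b * b')) = \<alpha> h (b * b')"
    unfolding h_def by auto
  have "\<alpha> gv (\<alpha> (i gv) (\<alpha> (m k gu) (b * b'))) = \<alpha> (m k gu) (b * b')"
    using \<alpha>_\<alpha>_i[OF gv] in2 i_i[OF gv] by simp
  then show ?thesis using c2 c1 m1 by simp
qed

end

section \<open>Invariants of a wide subgroupoid\<close>

locale wide_sub_action = partial_action +
  fixes K :: "'a set"
  assumes wide_K: "wide_subgroupoid K G s t m i"
begin

lemma K_subset: "K \<subseteq> G"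
  and i_in_K: "k \<in> K \<Longrightarrow> i k \<in> K"
  and m_in_K: "g \<in> K \<Longrightarrow> h \<in> K \<Longrightarrow> s g = t h \<Longrightarrow> m g h \<in> K"
  and objs_subset_K: "objs G s \<subseteq> K"
  using wide_K unfolding wide_subgroupoid_def subgroupoid_def by blast+

lemma objs_K: "objs K s = objs G s"
proof
  show "objs K s \<subseteq> objs G s" using K_subset unfolding objs_def by auto
  show "objs G s \<subseteq> objs K s"
  proof
    fix x assume "x \<in> objs G s"
    then have "x \<in> K" "s x = x" using objs_subset_K obj_iff by auto
    then show "x \<in> objs K s" unfolding objs_def by (auto intro: image_eqI[where x=x])
  qed
qed

definition component :: "'a \<Rightarrow> 'a set" where
  "component x = {y \<in> objs K s. hom K s t x y \<noteq> {}}"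

lemma components_eq: "components K s t = component ` objs G s"
  unfolding components_def component_def objs_K by simp

lemma component_subset: "component x \<subseteq> objs G s"
  unfolding component_def objs_K by auto

lemma component_self: "x \<in> objs G s \<Longrightarrow> x \<in> component x"
  unfolding component_def hom_def objs_K using objs_subset_K obj_iff t_obj by auto

lemma hom_i: "k \<in> hom K s t x y \<Longrightarrow> i k \<in> hom K s t y x"
  unfolding hom_def using i_in_K s_i t_i K_subset by auto

lemma hom_m: "k \<in> hom K s t y z \<Longrightarrow> h \<in> hom K s t x y \<Longrightarrow> m k h \<in> hom K s t x z"
  unfolding hom_def using m_in_K s_m t_m K_subset by (auto simp: subset_iff)

lemma component_eq: assumes "w \<in> component x" shows "component w = component x"
proof -
  obtain h where h: "h \<in> hom K s t x w" using assms component_def by auto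
  show ?thesis
    unfolding component_def using hom_m[OF _ h] hom_m[OF _ hom_i[OF h]] by blast
qed

lemma s_in_component_iff: assumes k: "k \<in> K" shows "s k \<in> component x \<longleftrightarrow> t k \<in> component x"
proof -
  have kk: "k \<in> hom K s t (s k) (t k)" unfolding hom_def using k by auto
  have "s k \<in> objs K s" "t k \<in> objs K s" using s_in_objs t_in_objs K_subset k objs_K by auto
  then show ?thesis unfolding component_def
    using hom_m[OF kk] hom_m[OF hom_i[OF kk]] by blast
qed

lemma objs_full_sub: assumes Y: "Y \<in> components K s t" shows "objs (full_sub K s t Y) s = Y"
proof
  show "objs (full_sub K s t Y) s \<subseteq> Y" unfolding objs_def full_sub_def by auto
next
  show "Y \<subseteq> objs (full_sub K s t Y) s"
  proof
    fix y assume y: "y \<in> Y"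
    then have "y \<in> objs G s" using Y components_eq component_subset by auto
    then have "y \<in> full_sub K s t Y" "s y = y"
      using objs_subset_K obj_iff t_obj y unfolding full_sub_def by auto
    then show "y \<in> objs (full_sub K s t Y) s" unfolding objs_def by (auto intro: image_eqI[where x=y])
  qed
qed

definition gt_component :: "'a set \<Rightarrow> bool" where
  "gt_component Y \<longleftrightarrow> Y \<in> components K s t \<and> group_type_conn (full_sub K s t Y) s t i e"

lemma gt_component_eq:
  assumes "gt_component Y" "y \<in> Y" shows "Y = component y" "Y \<subseteq> objs G s"
proof -
  obtain x where "Y = component x" using assms(1) unfolding gt_component_def components_eq by auto
  then show "Y = component y" "Y \<subseteq> objs G s" using component_eq component_subset assms(2) by auto
qed

lemma full_morphism_exists:
  assumes Y: "gt_component Y" and y: "y \<in> Y" and z: "z \<in> Y"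
  shows "\<exists>g\<in>K. s g = y \<and> t g = z \<and> full g"
proof -
  have Yc: "Y \<in> components K s t" using Y gt_component_def by auto
  obtain x \<tau> where \<tau>: "\<forall>w\<in>Y. \<tau> w \<in> hom (full_sub K s t Y) s t x w \<and>
            Sd e (i (\<tau> w)) = Sd e x \<and> Sd e (\<tau> w) = Sd e w"
    using Y unfolding gt_component_def group_type_conn_def objs_full_sub[OF Yc] by blast
  have f: "\<tau> w \<in> K \<and> s (\<tau> w) = x \<and> t (\<tau> w) = w \<and> full (\<tau> w)" if "w \<in> Y" for w
    using \<tau> that K_subset unfolding hom_def full_sub_def full_def by auto
  let ?g = "m (\<tau> z) (i (\<tau> y))"
  have tG: "\<tau> y \<in> G" "\<tau> z \<in> G" "i (\<tau> y) \<in> G" using f[OF y] f[OF z] K_subset i_in by auto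
  have c: "s (\<tau> z) = t (i (\<tau> y))" using f[OF y] f[OF z] t_i tG by auto
  have "?g \<in> K" using m_in_K f y z i_in_K c by auto
  moreover have "full ?g" using full_m[OF _ full_i c] f y z by auto
  moreover have "s ?g = y" "t ?g = z" using s_m[OF tG(2,3) c] t_m[OF tG(2,3) c] s_i f y z tG by auto
  ultimately show ?thesis by blast
qed

abbreviation Inv where "Inv \<equiv> invariants UNIV K i e \<alpha>"
abbreviation Loc where "Loc y \<equiv> invariants (Sd e y) (hom K s t y y) i e \<alpha>"

lemma Inv_iff: "a \<in> Inv \<longleftrightarrow> (\<forall>k\<in>K. \<alpha> k (a * e (i k)) = a * e k)"
  unfolding invariants_def by auto

lemma Loc_iff: "b \<in> Loc y \<longleftrightarrow> b \<in> Sd e y \<and> (\<forall>k\<in>hom K s t y y. \<alpha> k (b * e (i k)) = b * e k)"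
  unfolding invariants_def by auto

lemma mult_e_i_in_Sd: "k \<in> G \<Longrightarrow> a * e (i k) \<in> Sd e (i k)"
  using Sd_mult i_in e_in_Sd by metis

lemma Inv_add: "a \<in> Inv \<Longrightarrow> b \<in> Inv \<Longrightarrow> a + b \<in> Inv"
  unfolding Inv_iff using K_subset \<alpha>_add[OF _ mult_e_i_in_Sd mult_e_i_in_Sd]
  by (auto simp: distrib_right)

lemma Inv_diff: "a \<in> Inv \<Longrightarrow> b \<in> Inv \<Longrightarrow> a - b \<in> Inv"
  unfolding Inv_iff using K_subset \<alpha>_diff[OF _ mult_e_i_in_Sd mult_e_i_in_Sd]
  by (auto simp: left_diff_distrib)

lemma Inv_mult: assumes "a \<in> Inv" "b \<in> Inv" shows "a * b \<in> Inv"
  unfolding Inv_iff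
proof
  fix k assume k: "k \<in> K"
  then have kG: "k \<in> G" "i k \<in> G" using K_subset i_in by auto
  have "a * b * e (i k) = (a * e (i k)) * (b * e (i k))"
    using e_idem[OF kG(2)] by (metis mult.assoc mult.commute)
  then have "\<alpha> k (a * b * e (i k)) = \<alpha> k (a * e (i k)) * \<alpha> k (b * e (i k))"
    using \<alpha>_mult[OF kG(1) mult_e_i_in_Sd mult_e_i_in_Sd] kG by simp
  also have "\<dots> = a * e k * (b * e k)" using assms k Inv_iff by auto
  also have "\<dots> = a * b * e k" using e_idem[OF kG(1)] by (metis mult.assoc mult.commute)
  finally show "\<alpha> k (a * b * e (i k)) = a * b * e k" .
qed

lemma Inv_1: "1 \<in> Inv"
  unfolding Inv_iff using \<alpha>_unit K_subset by auto

lemma Inv_0: "0 \<in> Inv"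
  unfolding Inv_iff using \<alpha>_zero K_subset by auto

lemma Inv_vanish_along_full:
  assumes a: "a \<in> Inv" and g: "g \<in> K" "full g" and z: "a * e (s g) = 0"
  shows "a * e (t g) = 0"
proof -
  have "\<alpha> g (a * e (i g)) = a * e g" using a g Inv_iff by auto
  then show ?thesis using full_e[OF g(2)] z \<alpha>_zero g K_subset by auto
qed

lemma Inv_restrict: assumes a: "a \<in> Inv" and y: "y \<in> objs G s" shows "a * e y \<in> Loc y"
  unfolding Loc_iff
proof (intro conjI ballI)
  have yG: "y \<in> G" using y obj_iff by auto
  show "a * e y \<in> Sd e y" using Sd_mult[OF yG e_in_Sd[OF yG]] .
  fix k assume "k \<in> hom K s t y y"
  then have kK: "k \<in> K" and sk: "s k = y" "t k = y" and kG: "k \<in> G"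
    using K_subset unfolding hom_def by auto
  have "a * e y * e (i k) = a * e (i k)" using e_mult_e_s[OF kG] sk by (metis mult.assoc mult.commute)
  moreover have "a * e y * e k = a * e k" using e_mult_e_t[OF kG] sk by (metis mult.assoc mult.commute)
  ultimately show "\<alpha> k (a * e y * e (i k)) = a * e y * e k" using a kK Inv_iff by simp
qed

lemma \<alpha>_transport_invariant:
  assumes gu: "gu \<in> K" "full gu" "s gu = y" and gv: "gv \<in> K" "full gv" "s gv = y"
    and k: "k \<in> K" "t gu = s k" "t gv = t k" and b: "b \<in> Loc y"
  shows "\<alpha> k (\<alpha> gu b * e (i k)) = \<alpha> gv b * e k"
proof -
  have guG: "gu \<in> G" and gvG: "gv \<in> G" and kG: "k \<in> G" using gu gv k K_subset by auto
  have yG: "y \<in> G" using gu(3) s_in guG by auto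
  have ikG: "i k \<in> G" using i_in kG .
  have Du: "Sd e (i gu) = Sd e y" "Sd e gu = Sd e (s k)" using gu k full_def by auto
  have Dv: "Sd e (i gv) = Sd e y" using gv full_def by auto
  have bS: "b \<in> Sd e y" and binv: "\<forall>h\<in>hom K s t y y. \<alpha> h (b * e (i h)) = b * e h"
    using b Loc_iff by auto
  define h where "h = m (i gv) (m k gu)"
  define b' where "b' = \<alpha> (i gu) (e (i k))"
  have kguG: "m k gu \<in> G" using m_in kG guG k by simp
  have hK: "h \<in> K" unfolding h_def
    using m_in_K[OF i_in_K[OF gv(1)] m_in_K[OF k(1) gu(1)]] s_i[OF gvG] t_m[OF kG guG] k by simp
  have hG: "h \<in> G" and ihG: "i h \<in> G" using hK K_subset i_in by auto
  have hy: "s h = y" "t h = y" unfolding h_def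
    using s_m[OF i_in[OF gvG] kguG] t_m[OF i_in[OF gvG] kguG] s_m[OF kG guG] t_m[OF kG guG]
      s_i[OF gvG] t_i[OF gvG] gu gv k by simp_all
  note conj_b = \<alpha>_conj_full[OF gu(2) gv(2) kG _ k(2,3), folded h_def b'_def, of b]
  note conj_e = \<alpha>_conj_full[OF gu(2) gv(2) kG _ k(2,3), folded h_def b'_def, of "e y"]
  have eikS: "e (i k) \<in> Sd e (i (i gu))"
    using Sd_subset_t[OF ikG] e_in_Sd[OF ikG] t_i[OF kG] i_i[OF guG] Du(2) by auto
  have b'S: "b' \<in> Sd e y"
    unfolding b'_def using \<alpha>_in_Sd[OF i_in[OF guG] eikS] Du(1) by simp
  have eyb': "e y * b' = b'" using b'S Sd_iff[OF yG] by (simp add: mult.commute)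
  have "\<alpha> gu (e y) = e (s k)" using \<alpha>_unit[OF guG] full_e[OF gu(2)] gu k by simp
  moreover have "e (s k) * e (i k) = e (i k)" using e_mult_e_s[OF kG] by (simp add: mult.commute)
  ultimately have ek: "e k = \<alpha> gv (\<alpha> h b')"
    using conj_e eyb' \<alpha>_unit[OF kG] e_in_Sd[OF yG] gu gv by simp
  have b'ih: "b' \<in> Sd e (i h)" using conj_e eyb' e_in_Sd[OF yG] gu gv by simp
  have "\<alpha> h (b * e (i h)) = b * e h" using binv hK hy unfolding hom_def by blast
  moreover have "b * b' = (b * e (i h)) * b'"
    using b'ih Sd_iff[OF ihG] by (metis mult.assoc mult.commute)
  moreover have "b * e (i h) \<in> Sd e (i h)" using Sd_mult[OF ihG e_in_Sd[OF ihG]] .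
  ultimately have "\<alpha> h (b * b') = b * e h * \<alpha> h b'" using \<alpha>_mult[OF hG _ b'ih] by simp
  also have "\<dots> = b * \<alpha> h b'"
    using \<alpha>_in_Sd[OF hG b'ih] Sd_iff[OF hG] by (metis mult.assoc mult.commute)
  finally have hbb: "\<alpha> h (b * b') = b * \<alpha> h b'" .
  have hb'S: "\<alpha> h b' \<in> Sd e (i gv)" using Sd_subset_t[OF hG] \<alpha>_in_Sd[OF hG b'ih] hy Dv by auto
  show ?thesis
    using conj_b hbb \<alpha>_mult[OF gvG _ hb'S, of b] ek bS Dv gu gv by simp
qed

text \<open>The lift of b \<in> S_y^{K(y)} is \<Sum>_z \<alpha>_{g_z} b over the objects z of the component,
  with g_z : y \<rightarrow> z full.\<close>
lemma lift_exists:
  assumes Y: "gt_component Y" and y: "y \<in> Y" and b: "b \<in> Loc y"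
  shows "\<exists>c\<in>Inv. c * e y = b \<and> (\<forall>w\<in>objs G s. w \<notin> Y \<longrightarrow> c * e w = 0)"
proof -
  have Yc: "Y = component y" and Yo: "Y \<subseteq> objs G s" using gt_component_eq[OF Y y] by auto
  have finY: "finite Y" using finite_subset[OF Yo finite_objs] .
  have yo: "y \<in> objs G s" and yG: "y \<in> G" using y Yo obj_iff by auto
  have "\<forall>z\<in>Y. \<exists>g\<in>K. s g = y \<and> t g = z \<and> full g" using full_morphism_exists[OF Y y] by blast
  then obtain gz where gz: "\<forall>z\<in>Y. gz z \<in> K \<and> s (gz z) = y \<and> t (gz z) = z \<and> full (gz z)"
    by metis
  have bS: "b \<in> Sd e y" and binv: "\<forall>k\<in>hom K s t y y. \<alpha> k (b * e (i k)) = b * e k"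
    using b Loc_iff by auto
  have Sd_gz: "Sd e (i (gz z)) = Sd e y" "Sd e (gz z) = Sd e z" if "z \<in> Y" for z
    using gz that full_def by auto
  have \<alpha>_gz: "\<alpha> (gz z) b \<in> Sd e z" if "z \<in> Y" for z
    using \<alpha>_in_Sd[of "gz z" b] gz that Sd_gz[OF that] bS K_subset by auto
  define c where "c = (\<Sum>z\<in>Y. \<alpha> (gz z) b)"
  have cw: "c * e w = (if w \<in> Y then \<alpha> (gz w) b else 0)" if "w \<in> objs G s" for w
    unfolding c_def using sum_mult_e_obj[OF Yo finY \<alpha>_gz that] .
  have "gz y \<in> hom K s t y y" using gz y unfolding hom_def by auto
  then have "\<alpha> (gz y) (b * e (i (gz y))) = b * e (gz y)" using binv by blast
  then have "\<alpha> (gz y) b = b" using full_e gz y bS Sd_iff[OF yG] by simp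
  then have cy: "c * e y = b" using cw[OF yo] y by simp
  have "c \<in> Inv"
    unfolding Inv_iff
  proof
    fix k assume kK: "k \<in> K"
    have kG: "k \<in> G" using kK K_subset by auto
    have uo: "s k \<in> objs G s" and vo: "t k \<in> objs G s" using s_in_objs t_in_objs kG by auto
    have ce: "c * e (i k) = c * e (s k) * e (i k)" "c * e k = c * e (t k) * e k"
      using e_mult_e_s[OF kG] e_mult_e_t[OF kG] by (metis mult.assoc mult.commute)+
    have st: "s k \<in> Y \<longleftrightarrow> t k \<in> Y" using s_in_component_iff kK Yc by simp
    show "\<alpha> k (c * e (i k)) = c * e k"
    proof (cases "s k \<in> Y")
      case True
      then have "\<alpha> k (\<alpha> (gz (s k)) b * e (i k)) = \<alpha> (gz (t k)) b * e k"
        using \<alpha>_transport_invariant[OF _ _ _ _ _ _ kK _ _ b] gz st by auto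
      then show ?thesis using ce cw[OF uo] cw[OF vo] True st by simp
    qed (use ce cw[OF uo] cw[OF vo] \<alpha>_zero[OF kG] st in simp)
  qed
  then show ?thesis using cy cw by auto
qed

lemma Inv_eq_on_component:
  assumes Y: "gt_component Y" and y: "y \<in> Y" and c: "c \<in> Inv" "c' \<in> Inv"
    and outside: "\<forall>w\<in>objs G s. w \<notin> Y \<longrightarrow> c * e w = 0 \<and> c' * e w = 0"
    and eq: "c * e y = c' * e y"
  shows "c = c'"
proof -
  have d: "c - c' \<in> Inv" using Inv_diff c by auto
  have dy: "(c - c') * e y = 0" using eq by (simp add: left_diff_distrib)
  have "(c - c') * e w = 0" if w: "w \<in> objs G s" for w
  proof (cases "w \<in> Y")
    case True
    obtain g where g: "g \<in> K" "s g = y" "t g = w" "full g" using full_morphism_exists[OF Y y True] by blast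
    show ?thesis using Inv_vanish_along_full[OF d g(1) g(4)] g dy by simp
  next
    case False
    then show ?thesis using outside w by (simp add: left_diff_distrib)
  qed
  then show ?thesis using eq_0_if_mult_e_objs[of "c - c'"] by simp
qed

definition lift :: "'a set \<Rightarrow> 'a \<Rightarrow> 'b \<Rightarrow> 'b" where
  "lift Y y b = (SOME c. c \<in> Inv \<and> c * e y = b \<and> (\<forall>w\<in>objs G s. w \<notin> Y \<longrightarrow> c * e w = 0))"

lemma lift: assumes "gt_component Y" "y \<in> Y" "b \<in> Loc y"
  shows "lift Y y b \<in> Inv \<and> lift Y y b * e y = b \<and> (\<forall>w\<in>objs G s. w \<notin> Y \<longrightarrow> lift Y y b * e w = 0)"
  unfolding lift_def using lift_exists[OF assms] by (rule someI_ex[OF bexE]) blast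

lemma lift_unique:
  assumes Y: "gt_component Y" and y: "y \<in> Y" and b: "b \<in> Loc y"
    and c: "c \<in> Inv" "c * e y = b" "\<forall>w\<in>objs G s. w \<notin> Y \<longrightarrow> c * e w = 0"
  shows "lift Y y b = c"
  using Inv_eq_on_component[OF Y y] lift[OF Y y b] c by auto

lemma Loc_add:
  assumes Y: "gt_component Y" and y: "y \<in> Y" and a: "a \<in> Loc y" and b: "b \<in> Loc y"
  shows "a + b \<in> Loc y"
proof -
  have "(lift Y y a + lift Y y b) * e y \<in> Loc y"
    using Inv_restrict Inv_add lift[OF Y y a] lift[OF Y y b] gt_component_eq[OF Y y] y by auto
  then show ?thesis using lift[OF Y y a] lift[OF Y y b] by (simp add: distrib_right)
qed

lemma Loc_mult:
  assumes Y: "gt_component Y" and y: "y \<in> Y" and a: "a \<in> Loc y" and b: "b \<in> Loc y"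
  shows "a * b \<in> Loc y"
proof -
  have yo: "y \<in> objs G s" using gt_component_eq[OF Y y] y by auto
  have "(lift Y y a * lift Y y b) * e y \<in> Loc y"
    using Inv_restrict[OF _ yo] Inv_mult lift[OF Y y a] lift[OF Y y b] by auto
  moreover have "e y * e y = e y" using e_idem yo obj_iff by auto
  then have "(lift Y y a * lift Y y b) * e y = (lift Y y a * e y) * (lift Y y b * e y)"
    by (metis mult.assoc mult.commute)
  ultimately show ?thesis using lift[OF Y y a] lift[OF Y y b] by simp
qed

lemma Loc_0: "y \<in> objs G s \<Longrightarrow> 0 \<in> Loc y"
  using Inv_restrict[OF Inv_0] by fastforce

lemma lift_add:
  assumes Y: "gt_component Y" and y: "y \<in> Y" and a: "a \<in> Loc y" and b: "b \<in> Loc y"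
  shows "lift Y y (a + b) = lift Y y a + lift Y y b"
  using lift_unique[OF Y y Loc_add[OF Y y a b]] lift[OF Y y a] lift[OF Y y b] Inv_add
  by (simp add: distrib_right)

lemma lift_mult_Inv:
  assumes Y: "gt_component Y" and y: "y \<in> Y" and c: "c \<in> Inv" and a: "a \<in> Loc y"
  shows "lift Y y (c * e y * a) = c * lift Y y a"
proof -
  have yo: "y \<in> objs G s" using gt_component_eq[OF Y y] y by auto
  have "c * e y * a \<in> Loc y" using Loc_mult[OF Y y Inv_restrict[OF c yo] a] .
  moreover have "c * lift Y y a \<in> Inv" using Inv_mult c lift[OF Y y a] by auto
  moreover have "a * e y = a" using a Loc_iff Sd_iff yo obj_iff by auto
  then have "c * lift Y y a * e y = c * e y * a"
    using lift[OF Y y a] by (metis mult.assoc mult.commute)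
  moreover have "\<forall>w\<in>objs G s. w \<notin> Y \<longrightarrow> c * lift Y y a * e w = 0"
    using lift[OF Y y a] by (simp add: mult.assoc)
  ultimately show ?thesis using lift_unique[OF Y y] by blast
qed

lemma lift_mult:
  assumes Y: "gt_component Y" and y: "y \<in> Y" and a: "a \<in> Loc y" and b: "b \<in> Loc y"
  shows "lift Y y (a * b) = lift Y y a * lift Y y b"
  using lift_mult_Inv[OF Y y _ b, of "lift Y y a"] lift[OF Y y a] by simp

lemma lift_0: assumes "gt_component Y" "y \<in> Y" shows "lift Y y 0 = 0"
  using lift_unique[OF assms Loc_0 Inv_0] gt_component_eq[OF assms] assms(2) by auto

lemma lift_e_mult_e:
  assumes Y: "gt_component Y" and y: "y \<in> Y" and w: "w \<in> Y"
  shows "lift Y y (e y) * e w = e w"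
proof -
  have yo: "y \<in> objs G s" using gt_component_eq[OF Y y] y by auto
  have ey: "e y \<in> Loc y" using Inv_restrict[OF Inv_1 yo] by simp
  have d: "lift Y y (e y) - 1 \<in> Inv" using Inv_diff lift[OF Y y ey] Inv_1 by auto
  have dy: "(lift Y y (e y) - 1) * e y = 0" using lift[OF Y y ey] by (simp add: left_diff_distrib)
  obtain g where g: "g \<in> K" "s g = y" "t g = w" "full g" using full_morphism_exists[OF Y y w] by blast
  have "(lift Y y (e y) - 1) * e w = 0" using Inv_vanish_along_full[OF d g(1) g(4)] g dy by simp
  then show ?thesis by (simp add: left_diff_distrib)
qed

lemma finite_components: "finite (components K s t)"
  unfolding components_eq using finite_objs by simp

lemma sum_lift_e:
  assumes gt: "\<forall>Y\<in>components K s t. gt_component Y" and rep: "\<forall>Y\<in>components K s t. rep Y \<in> Y"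
  shows "(\<Sum>Y\<in>components K s t. lift Y (rep Y) (e (rep Y))) = 1"
proof -
  let ?X = "\<Sum>Y\<in>components K s t. lift Y (rep Y) (e (rep Y))"
  have "?X * e w = e w" if w: "w \<in> objs G s" for w
  proof -
    have Yw: "component w \<in> components K s t" "w \<in> component w"
      using components_eq w component_self by auto
    have "lift Y (rep Y) (e (rep Y)) * e w = (if Y = component w then e w else 0)"
      if Y: "Y \<in> components K s t" for Y
    proof (cases "Y = component w")
      case True
      then show ?thesis using lift_e_mult_e gt rep Y Yw by auto
    next
      case False
      have Yg: "gt_component Y" "rep Y \<in> Y" using gt rep Y by auto
      then have "w \<notin> Y" using gt_component_eq False component_eq by blast
      moreover have "e (rep Y) \<in> Loc (rep Y)"
        using Inv_restrict[OF Inv_1] gt_component_eq[OF Yg] Yg by auto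
      ultimately show ?thesis using lift[OF Yg] w False by auto
    qed
    then have "?X * e w = (\<Sum>Y\<in>components K s t. if Y = component w then e w else 0)"
      by (simp add: sum_distrib_right)
    then show ?thesis using finite_components Yw by simp
  qed
  then have "?X - 1 = 0" using eq_0_if_mult_e_objs[of "?X - 1"] by (simp add: left_diff_distrib)
  then show ?thesis by simp
qed

lemma gt_component_objs:
  assumes "connected_gpd K s t" "group_type_conn K s t i e"
  shows "gt_component (objs G s)"
proof -
  obtain x where x: "x \<in> objs G s" using assms(2) objs_K unfolding group_type_conn_def by auto
  have "component x = objs G s" using assms(1) x objs_K unfolding component_def connected_gpd_def by auto
  then have "objs G s \<in> components K s t" using x components_eq by auto
  moreover have "full_sub K s t (objs G s) = K"
    unfolding full_sub_def using s_in_objs t_in_objs K_subset by auto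
  ultimately show ?thesis using assms(2) unfolding gt_component_def by simp
qed

lemma separable_Loc_if_separable_Inv:
  assumes Y: "gt_component Y" and y: "y \<in> Y"
    and sep: "separable B Inv 1" and B: "\<forall>r\<in>B. r * e y \<in> B'"
  shows "separable B' (Loc y) (e y)"
proof -
  have yo: "y \<in> objs G s" using gt_component_eq[OF Y y] y by auto
  have idem: "e y * e y = e y" using e_idem yo obj_iff by auto
  have mult: "a * b * e y = a * e y * (b * e y)" for a b
    using idem by (metis mult.assoc mult.commute)
  obtain ys where ys: "set ys \<subseteq> Loc y \<times> Loc y" "(\<Sum>(a, b)\<leftarrow>ys. a * b) = 1 * e y"
      "\<forall>c\<in>Inv. \<forall>c'. (\<forall>a\<in>Inv. c * a * e y = c' * (a * e y)) \<longrightarrow> comm_defect c' ys \<in> tensor_rel B' (Loc y)"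
  proof (atomize_elim, rule separable_transfer[OF sep])
    show "(\<lambda>a. a * e y) ` Inv \<subseteq> Loc y" using Inv_restrict yo by auto
    show "\<forall>r\<in>B. \<exists>r'\<in>B'. \<forall>a\<in>Inv. r * a * e y = r' * (a * e y)" using B mult by blast
  qed (use Inv_0 Inv_add Inv_mult mult in \<open>auto simp: distrib_right\<close>)
  have "comm_defect c' ys \<in> tensor_rel B' (Loc y)" if c': "c' \<in> Loc y" for c'
  proof -
    obtain c where "c \<in> Inv" "c * e y = c'" using lift_exists[OF Y y c'] by auto
    then show ?thesis using ys(3) mult by auto
  qed
  then show ?thesis unfolding separable_iff_comm_defect using ys(1,2) by auto
qed

lemma separable_lift_if_separable_Loc:
  assumes Y: "gt_component Y" and y: "y \<in> Y" and sep: "separable B' (Loc y) (e y)"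
    and B: "B \<subseteq> Inv" "\<forall>r\<in>B'. \<exists>r'\<in>B. r' * e y = r"
  shows "separable B Inv (lift Y y (e y))"
proof -
  have yo: "y \<in> objs G s" using gt_component_eq[OF Y y] y by auto
  obtain ys where ys: "set ys \<subseteq> Inv \<times> Inv" "(\<Sum>(a, b)\<leftarrow>ys. a * b) = lift Y y (e y)"
      "\<forall>c\<in>Loc y. \<forall>c'. (\<forall>a\<in>Loc y. lift Y y (c * a) = c' * lift Y y a) \<longrightarrow>
         comm_defect c' ys \<in> tensor_rel B Inv"
  proof (atomize_elim, rule separable_transfer[OF sep])
    show "lift Y y ` Loc y \<subseteq> Inv" using lift[OF Y y] by auto
    show "\<forall>r\<in>B'. \<exists>r'\<in>B. \<forall>a\<in>Loc y. lift Y y (r * a) = r' * lift Y y a"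
    proof
      fix r assume "r \<in> B'"
      then obtain r' where "r' \<in> B" "r' * e y = r" using B(2) by blast
      then show "\<exists>r'\<in>B. \<forall>a\<in>Loc y. lift Y y (r * a) = r' * lift Y y a"
        using lift_mult_Inv[OF Y y] B(1) by blast
    qed
    show "0 \<in> Loc y" using Loc_0[OF yo] .
    show "lift Y y 0 = 0" using lift_0[OF Y y] .
  qed (simp_all add: Loc_add[OF Y y] Loc_mult[OF Y y] lift_add[OF Y y] lift_mult[OF Y y])
  have "comm_defect c' ys \<in> tensor_rel B Inv" if "c' \<in> Inv" for c'
    using ys(3) Inv_restrict[OF that yo] lift_mult_Inv[OF Y y that] by auto
  then show ?thesis unfolding separable_iff_comm_defect using ys(1,2) by auto
qed

end

theorem lemma5p2:
  fixes G H :: "'g set" and s t i :: "'g \<Rightarrow> 'g" and m :: "'g \<Rightarrow> 'g \<Rightarrow> 'g"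
    and e :: "'g \<Rightarrow> 'r::comm_ring_1" and \<alpha> :: "'g \<Rightarrow> 'r \<Rightarrow> 'r"
    and rep :: "'g set \<Rightarrow> 'g"
  assumes "groupoid G s t m i" and "finite G" and "connected_gpd G s t"
    and "unital_partial_action G s t m i e \<alpha>"
    and "group_type_conn G s t i e"
    and "\<forall>g\<in>G. e g \<noteq> 0"
    and "H \<in> wSub G s t m i e"
    and "\<forall>Y\<in>components H s t. rep Y \<in> Y"
  shows "separable (invariants UNIV G i e \<alpha>) (invariants UNIV H i e \<alpha>) 1 \<longleftrightarrow>
    (\<forall>Y\<in>components H s t.
       separable (invariants (Sd e (rep Y)) (hom G s t (rep Y) (rep Y)) i e \<alpha>)
                 (invariants (Sd e (rep Y)) (hom H s t (rep Y) (rep Y)) i e \<alpha>)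
                 (e (rep Y)))"
proof -
  interpret partial_action G s t i m e \<alpha> using assms(1,4,2) by unfold_locales
  interpret R: wide_sub_action G s t i m e \<alpha> G using wide_subgroupoid_self by unfold_locales
  interpret H: wide_sub_action G s t i m e \<alpha> H using assms(7) unfolding wSub_def by unfold_locales auto
  have H_gt: "\<forall>Y\<in>components H s t. H.gt_component Y"
    using assms(7) unfolding wSub_def group_type_def H.gt_component_def by auto
  have rep: "rep Y \<in> Y" "rep Y \<in> objs G s" if "Y \<in> components H s t" for Y
  proof -
    show "rep Y \<in> Y" using assms(8) that by blast
    then show "rep Y \<in> objs G s" using H.gt_component_eq(2) H_gt that by blast
  qed
  have R_lift: "\<forall>r\<in>R.Loc y. \<exists>r'\<in>R.Inv. r' * e y = r" if "y \<in> objs G s" for y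
    using R.lift_exists[OF R.gt_component_objs[OF assms(3,5)] that] by fastforce
  have R_sub_T: "R.Inv \<subseteq> H.Inv"
    using H.K_subset unfolding invariants_def by blast
  show ?thesis
  proof
    assume sep: "separable R.Inv H.Inv 1"
    have "separable (R.Loc (rep Y)) (H.Loc (rep Y)) (e (rep Y))" if Y: "Y \<in> components H s t" for Y
      using H.separable_Loc_if_separable_Inv[OF H_gt[rule_format, OF Y] rep(1)[OF Y] sep]
        R.Inv_restrict[OF _ rep(2)[OF Y]] by blast
    then show "\<forall>Y\<in>components H s t. separable (R.Loc (rep Y)) (H.Loc (rep Y)) (e (rep Y))"
      by blast
  next
    assume local: "\<forall>Y\<in>components H s t. separable (R.Loc (rep Y)) (H.Loc (rep Y)) (e (rep Y))"
    have "separable R.Inv H.Inv (H.lift Y (rep Y) (e (rep Y)))" if Y: "Y \<in> components H s t" for Y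
      using H.separable_lift_if_separable_Loc[OF H_gt[rule_format, OF Y] rep(1)[OF Y] _ R_sub_T]
        local Y R_lift[OF rep(2)[OF Y]] by blast
    then have "separable R.Inv H.Inv (\<Sum>Y\<in>components H s t. H.lift Y (rep Y) (e (rep Y)))"
      by (blast intro: separable_sum[OF H.finite_components])
    then show "separable R.Inv H.Inv 1"
      using H.sum_lift_e[OF H_gt] rep by simp
  qed
qed

end
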